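(* Let $I\ge1$, $\eta>0$, $\lambda^*\in(0,\infty)^I$, $\alpha\in(0,\infty)^I$, $\hat\alpha=\sum_{i=1}^I1/\alpha_i$, $h_0\ge0$ and $h_1,\dots,h_I$ with $h_i>h_0$ for all $i$, $c\in\mathbb{R}_+^I$, and set $h=\min_i h_i-h_0$ and $r=\min_i c_i/\lambda_i^*$. Let $\chi$ be a one-dimensional Brownian motion with drift $a$, variance $\sigma^2$ and $\chi(0)\ge0$. (RBCP) A policy is a triple $(Z,U,\zeta)$ of $I$-dimensional processes nonanticipating with respect to $\chi$ such that, with $W(t)=\sum_{i=1}^IZ_i(t)$, $$W(t)=\chi(t)-\eta\int_0^tW(s)ds-\int_0^t\sum_{i=1}^I\zeta_i(s)ds+\sum_{i=1}^I\lambda_i^*U_i(t),\quad t\ge0,$$ $Z(t)\ge0$ for $t\ge0$, and $U$ is nondecreasing with $U(0)=0$; its cost is $\limsup_{t\to\infty}\frac1tE[\int_0^t(\sum_i\alpha_i\zeta_i(s)^2+\sum_i(h_i-h_0)Z_i(s))ds+c'U(t)]$. (EWF) A policy is a real-valued process $\theta$ nonanticipating with respect to $\chi$ such that, for some process $L$ that is nondecreasing with $L(0)=0$, the process $W(t)=\chi(t)-\eta\int_0^tW(s)ds-\int_0^t\theta(s)ds+L(t)$ satisfies $W(t)\ge0$ for $t\ge0$; its cost is $\limsup_{t\to\infty}\frac1tE[\int_0^t(\theta(s)^2/\hat\alpha+hW(s))ds+rL(t)]$. Then every admissible policy $\theta$ for the EWF yields an admissible policy $(Z,U,\zeta)$ for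 the RBCP with the same cost; and for every admissible policy $(Z,U,\zeta)$ of the RBCP there exists an admissible policy $\theta$ for the EWF whose cost is less than or equal to that of $(Z,U,\zeta)$ for the RBCP. *)

theory Defs
  imports "HOL-Probability.Probability"
begin

text \<open>One-dimensional Brownian motion with drift a and variance sigma^2 (sigma > 0 is the
standard deviation) on the probability space M: continuous paths on [0,inf), Gaussian
increments N(a(t-s), sigma^2 (t-s)), and independence of chi(t0) and the successive
increments chi(t_{k+1}) - chi(t_k) for any 0 <= t0 <= t1 <= ... \<close>
definition brownian_motion_drift ::
  "'a measure \<Rightarrow> (real \<Rightarrow> 'a \<Rightarrow> real) \<Rightarrow> real \<Rightarrow> real \<Rightarrow> bool" where
  "brownian_motion_drift M X a sd \<longleftrightarrow>
     prob_space M \<and>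
     (\<forall>t. X t \<in> borel_measurable M) \<and>
     (\<forall>\<omega>\<in>space M. continuous_on {0..} (\<lambda>t. X t \<omega>)) \<and>
     (\<forall>s t. 0 \<le> s \<longrightarrow> s < t \<longrightarrow>
        distributed M lborel (\<lambda>\<omega>. X t \<omega> - X s \<omega>)
          (normal_density (a * (t - s)) (sd * sqrt (t - s)))) \<and>
     (\<forall>(ts :: nat \<Rightarrow> real) n. 0 \<le> ts 0 \<and> (\<forall>k. ts k \<le> ts (Suc k)) \<longrightarrow>
        prob_space.indep_vars M (\<lambda>_. borel)
          (\<lambda>k \<omega>. if k = 0 then X (ts 0) \<omega> else X (ts k) \<omega> - X (ts (k - 1)) \<omega>) {..n})"

definition chi_filtration :: "'a measure \<Rightarrow> (real \<Rightarrow> 'a \<Rightarrow> real) \<Rightarrow> real \<Rightarrow> 'a measure" where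
  "chi_filtration M X t =
     sigma (space M) {X s -` B \<inter> space M | s B. 0 \<le> s \<and> s \<le> t \<and> B \<in> sets borel}"

definition nonanticipating ::
  "'a measure \<Rightarrow> (real \<Rightarrow> 'a \<Rightarrow> real) \<Rightarrow> (real \<Rightarrow> 'a \<Rightarrow> real) \<Rightarrow> bool" where
  "nonanticipating M X Y \<longleftrightarrow> (\<forall>t\<ge>0. Y t \<in> borel_measurable (chi_filtration M X t))"

definition rbcp_policy ::
  "'a measure \<Rightarrow> (real \<Rightarrow> 'a \<Rightarrow> real) \<Rightarrow> real \<Rightarrow> ('i::finite \<Rightarrow> real)
   \<Rightarrow> ('i \<Rightarrow> real \<Rightarrow> 'a \<Rightarrow> real) \<Rightarrow> ('i \<Rightarrow> real \<Rightarrow> 'a \<Rightarrow> real)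
   \<Rightarrow> ('i \<Rightarrow> real \<Rightarrow> 'a \<Rightarrow> real) \<Rightarrow> bool" where
  "rbcp_policy M X eta lam Z U zeta \<longleftrightarrow>
     (\<forall>i. nonanticipating M X (Z i) \<and> nonanticipating M X (U i) \<and> nonanticipating M X (zeta i)) \<and>
     (\<forall>\<omega>\<in>space M. \<forall>t\<ge>0.
        set_integrable lborel {0..t} (\<lambda>s. \<Sum>i\<in>UNIV. Z i s \<omega>) \<and>
        (\<forall>i. set_integrable lborel {0..t} (\<lambda>s. zeta i s \<omega>))) \<and>
     (\<forall>\<omega>\<in>space M. \<forall>t\<ge>0.
        (\<Sum>i\<in>UNIV. Z i t \<omega>) =
          X t \<omega> - eta * set_lebesgue_integral lborel {0..t} (\<lambda>s. \<Sum>i\<in>UNIV. Z i s \<omega>)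
              - set_lebesgue_integral lborel {0..t} (\<lambda>s. \<Sum>i\<in>UNIV. zeta i s \<omega>)
              + (\<Sum>i\<in>UNIV. lam i * U i t \<omega>)) \<and>
     (\<forall>\<omega>\<in>space M. \<forall>t\<ge>0. \<forall>i. 0 \<le> Z i t \<omega>) \<and>
     (\<forall>\<omega>\<in>space M. \<forall>i. U i 0 \<omega> = 0 \<and> mono_on {0..} (\<lambda>t. U i t \<omega>))"

text \<open>Long-run average cost of an RBCP policy (all integrands are nonnegative, so the
expectation and time integral are taken as nonnegative (extended) integrals).\<close>
definition rbcp_cost ::
  "'a measure \<Rightarrow> ('i::finite \<Rightarrow> real) \<Rightarrow> real \<Rightarrow> ('i \<Rightarrow> real) \<Rightarrow> ('i \<Rightarrow> real)
   \<Rightarrow> ('i \<Rightarrow> real \<Rightarrow> 'a \<Rightarrow> real) \<Rightarrow> ('i \<Rightarrow> real \<Rightarrow> 'a \<Rightarrow> real)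
   \<Rightarrow> ('i \<Rightarrow> real \<Rightarrow> 'a \<Rightarrow> real) \<Rightarrow> ennreal" where
  "rbcp_cost M alpha h0 hh c Z U zeta =
     Limsup at_top (\<lambda>t::real. ennreal (1 / t) *
       (\<integral>\<^sup>+\<omega>. ((\<integral>\<^sup>+s\<in>{0..t}. ennreal (\<Sum>i\<in>UNIV. alpha i * (zeta i s \<omega>)\<^sup>2 + (hh i - h0) * Z i s \<omega>) \<partial>lborel)
               + ennreal (\<Sum>i\<in>UNIV. c i * U i t \<omega>)) \<partial>M))"

definition ewf_policy ::
  "'a measure \<Rightarrow> (real \<Rightarrow> 'a \<Rightarrow> real) \<Rightarrow> real
   \<Rightarrow> (real \<Rightarrow> 'a \<Rightarrow> real) \<Rightarrow> (real \<Rightarrow> 'a \<Rightarrow> real) \<Rightarrow> (real \<Rightarrow> 'a \<Rightarrow> real) \<Rightarrow> bool" where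
  "ewf_policy M X eta theta L W \<longleftrightarrow>
     nonanticipating M X theta \<and> nonanticipating M X L \<and> nonanticipating M X W \<and>
     (\<forall>\<omega>\<in>space M. \<forall>t\<ge>0.
        set_integrable lborel {0..t} (\<lambda>s. W s \<omega>) \<and>
        set_integrable lborel {0..t} (\<lambda>s. theta s \<omega>)) \<and>
     (\<forall>\<omega>\<in>space M. \<forall>t\<ge>0.
        W t \<omega> = X t \<omega> - eta * set_lebesgue_integral lborel {0..t} (\<lambda>s. W s \<omega>)
                 - set_lebesgue_integral lborel {0..t} (\<lambda>s. theta s \<omega>) + L t \<omega>) \<and>
     (\<forall>\<omega>\<in>space M. \<forall>t\<ge>0. 0 \<le> W t \<omega>) \<and>
     (\<forall>\<omega>\<in>space M. L 0 \<omega> = 0 \<and> mono_on {0..} (\<lambda>t. L t \<omega>))"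

definition ewf_cost ::
  "'a measure \<Rightarrow> real \<Rightarrow> real \<Rightarrow> real
   \<Rightarrow> (real \<Rightarrow> 'a \<Rightarrow> real) \<Rightarrow> (real \<Rightarrow> 'a \<Rightarrow> real) \<Rightarrow> (real \<Rightarrow> 'a \<Rightarrow> real) \<Rightarrow> ennreal" where
  "ewf_cost M alphahat h r theta L W =
     Limsup at_top (\<lambda>t::real. ennreal (1 / t) *
       (\<integral>\<^sup>+\<omega>. ((\<integral>\<^sup>+s\<in>{0..t}. ennreal ((theta s \<omega>)\<^sup>2 / alphahat + h * W s \<omega>) \<partial>lborel)
               + ennreal (r * L t \<omega>)) \<partial>M))"

end

theory Submission
  imports Defs
begin

text \<open>An EWF policy is turned into an RBCP policy with the same cost by putting the whole
workload into a buffer k of smallest holding cost hh k, the whole regulator into a buffer j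
of smallest ratio c j / lam j, and splitting the control theta among the buffers in proportion
to 1 / alpha i; with these choices the running and terminal costs of the two problems agree
pointwise. Conversely, aggregating an RBCP policy into W = sum of the Z i, theta = sum of the
zeta i and L = sum of the lam i * U i gives an EWF policy whose costs are pointwise smaller:
theta^2 / alphahat is at most the sum of the alpha i * zeta i^2 by Cauchy-Schwarz, and
h * W, r * L are bounded by the RBCP holding and control costs because Z and U are
nonnegative. The argument is pathwise.\<close>

lemma nonanticipating_const: "nonanticipating M X (\<lambda>t \<omega>. k)"
  unfolding nonanticipating_def by simp

lemma nonanticipating_compose:
  assumes "nonanticipating M X Y" and "f \<in> borel_measurable borel"
  shows "nonanticipating M X (\<lambda>t \<omega>. f (Y t \<omega>))"
  using assms unfolding nonanticipating_def by (auto intro: measurable_compose)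

lemma nonanticipating_mult:
  "nonanticipating M X Y \<Longrightarrow> nonanticipating M X (\<lambda>t \<omega>. k * Y t \<omega>)"
  by (erule nonanticipating_compose) simp

lemma nonanticipating_divide:
  "nonanticipating M X Y \<Longrightarrow> nonanticipating M X (\<lambda>t \<omega>. Y t \<omega> / k)"
  by (erule nonanticipating_compose) simp

lemma nonanticipating_sum:
  assumes "\<And>i. i \<in> S \<Longrightarrow> nonanticipating M X (Y i)"
  shows "nonanticipating M X (\<lambda>t \<omega>. \<Sum>i\<in>S. Y i t \<omega>)"
  using assms unfolding nonanticipating_def by (auto intro!: borel_measurable_sum)

lemma set_integrable_sum:
  fixes f :: "'i \<Rightarrow> 'a \<Rightarrow> real"
  assumes "\<And>i. i \<in> S \<Longrightarrow> set_integrable M A (f i)"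
  shows "set_integrable M A (\<lambda>x. \<Sum>i\<in>S. f i x)"
proof -
  have "integrable M (\<lambda>x. \<Sum>i\<in>S. indicator A x *\<^sub>R f i x)"
    using assms unfolding set_integrable_def by (intro Bochner_Integration.integrable_sum) auto
  then show ?thesis
    unfolding set_integrable_def by (simp add: sum_distrib_left)
qed

lemma square_sum_div_sum_inverse_le:
  fixes z alpha :: "'i \<Rightarrow> real"
  assumes "\<And>i. i \<in> S \<Longrightarrow> alpha i > 0"
  shows "(\<Sum>i\<in>S. z i)\<^sup>2 / (\<Sum>i\<in>S. 1 / alpha i) \<le> (\<Sum>i\<in>S. alpha i * (z i)\<^sup>2)"
proof -
  have "sqrt (alpha i) * z i * (1 / sqrt (alpha i)) = z i" if "i \<in> S" for i
    using assms[OF that] by simp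
  then have "(\<Sum>i\<in>S. z i)\<^sup>2 = (\<Sum>i\<in>S. sqrt (alpha i) * z i * (1 / sqrt (alpha i)))\<^sup>2"
    by simp
  also have "\<dots> \<le> (\<Sum>i\<in>S. (sqrt (alpha i) * z i)\<^sup>2) * (\<Sum>i\<in>S. (1 / sqrt (alpha i))\<^sup>2)"
    by (rule Cauchy_Schwarz_ineq_sum)
  also have "\<dots> = (\<Sum>i\<in>S. alpha i * (z i)\<^sup>2) * (\<Sum>i\<in>S. 1 / alpha i)"
    using assms by (intro arg_cong2[where f = times] sum.cong)
      (auto simp: power_mult_distrib power_divide less_imp_le)
  finally have "(\<Sum>i\<in>S. z i)\<^sup>2 \<le> (\<Sum>i\<in>S. alpha i * (z i)\<^sup>2) * (\<Sum>i\<in>S. 1 / alpha i)" .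
  moreover have "0 \<le> (\<Sum>i\<in>S. alpha i * (z i)\<^sup>2)"
    using assms by (intro sum_nonneg) (simp add: less_imp_le)
  moreover have "0 \<le> (\<Sum>i\<in>S. 1 / alpha i)"
    using assms by (intro sum_nonneg) (simp add: less_imp_le)
  ultimately show ?thesis
    by (cases "(\<Sum>i\<in>S. 1 / alpha i) = 0") (simp_all add: divide_le_eq)
qed

definition average_cost ::
  "'a measure \<Rightarrow> (real \<Rightarrow> 'a \<Rightarrow> real) \<Rightarrow> (real \<Rightarrow> 'a \<Rightarrow> real) \<Rightarrow> ennreal" where
  "average_cost M f F =
     Limsup at_top (\<lambda>t::real. ennreal (1 / t) *
       (\<integral>\<^sup>+\<omega>. ((\<integral>\<^sup>+s\<in>{0..t}. ennreal (f s \<omega>) \<partial>lborel) + ennreal (F t \<omega>)) \<partial>M))"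

lemma rbcp_cost_eq_average_cost:
  "rbcp_cost M alpha h0 hh c Z U zeta =
     average_cost M (\<lambda>s \<omega>. \<Sum>i\<in>UNIV. alpha i * (zeta i s \<omega>)\<^sup>2 + (hh i - h0) * Z i s \<omega>)
       (\<lambda>t \<omega>. \<Sum>i\<in>UNIV. c i * U i t \<omega>)"
  unfolding rbcp_cost_def average_cost_def ..

lemma ewf_cost_eq_average_cost:
  "ewf_cost M alphahat h r theta L W =
     average_cost M (\<lambda>s \<omega>. (theta s \<omega>)\<^sup>2 / alphahat + h * W s \<omega>) (\<lambda>t \<omega>. r * L t \<omega>)"
  unfolding ewf_cost_def average_cost_def ..

lemma average_cost_mono:
  assumes "\<And>s \<omega>. 0 \<le> s \<Longrightarrow> \<omega> \<in> space M \<Longrightarrow> f s \<omega> \<le> g s \<omega>"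
    and "\<And>t \<omega>. 0 \<le> t \<Longrightarrow> \<omega> \<in> space M \<Longrightarrow> F t \<omega> \<le> G t \<omega>"
  shows "average_cost M f F \<le> average_cost M g G"
  unfolding average_cost_def
proof (intro Limsup_mono eventually_at_top_linorderI[of 0])
  fix t :: real assume t: "0 \<le> t"
  show "ennreal (1 / t) * (\<integral>\<^sup>+\<omega>. ((\<integral>\<^sup>+s\<in>{0..t}. ennreal (f s \<omega>) \<partial>lborel) + ennreal (F t \<omega>)) \<partial>M)
    \<le> ennreal (1 / t) * (\<integral>\<^sup>+\<omega>. ((\<integral>\<^sup>+s\<in>{0..t}. ennreal (g s \<omega>) \<partial>lborel) + ennreal (G t \<omega>)) \<partial>M)"
  proof (intro mult_left_mono nn_integral_mono add_mono)
    fix \<omega> s assume "\<omega> \<in> space M"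
    then show "ennreal (F t \<omega>) \<le> ennreal (G t \<omega>)"
      and "ennreal (f s \<omega>) * indicator {0..t} s \<le> ennreal (g s \<omega>) * indicator {0..t} s"
      using assms t by (auto intro: ennreal_leI split: split_indicator)
  qed auto
qed

lemma rbcp_policy_of_ewf_policy:
  assumes ewf: "ewf_policy M X eta theta L W"
    and lam: "lam j > 0" and weights: "(\<Sum>i\<in>UNIV. w i) = 1"
  shows "rbcp_policy M X eta lam
           (\<lambda>i t \<omega>. if i = k then W t \<omega> else 0)
           (\<lambda>i t \<omega>. if i = j then L t \<omega> / lam j else 0)
           (\<lambda>i t \<omega>. w i * theta t \<omega>)"
proof -
  have na: "nonanticipating M X theta" "nonanticipating M X L" "nonanticipating M X W"
    and integrable: "\<forall>\<omega>\<in>space M. \<forall>t\<ge>0. set_integrable lborel {0..t} (\<lambda>s. W s \<omega>) \<and>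
        set_integrable lborel {0..t} (\<lambda>s. theta s \<omega>)"
    and dynamics: "\<forall>\<omega>\<in>space M. \<forall>t\<ge>0.
        W t \<omega> = X t \<omega> - eta * set_lebesgue_integral lborel {0..t} (\<lambda>s. W s \<omega>)
          - set_lebesgue_integral lborel {0..t} (\<lambda>s. theta s \<omega>) + L t \<omega>"
    and W_nonneg: "\<forall>\<omega>\<in>space M. \<forall>t\<ge>0. 0 \<le> W t \<omega>"
    and L_reg: "\<forall>\<omega>\<in>space M. L 0 \<omega> = 0 \<and> mono_on {0..} (\<lambda>t. L t \<omega>)"
    using ewf unfolding ewf_policy_def by blast+
  have sum_Z: "(\<Sum>i\<in>UNIV. if i = k then W t \<omega> else 0) = W t \<omega>" for t \<omega>
    by simp
  have sum_U: "(\<Sum>i\<in>UNIV. lam i * (if i = j then L t \<omega> / lam j else 0)) = L t \<omega>" for t \<omega>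
    using lam by (simp add: if_distrib[of "\<lambda>x. lam _ * x"] cong: if_cong)
  have sum_zeta: "(\<Sum>i\<in>UNIV. w i * theta t \<omega>) = theta t \<omega>" for t \<omega>
    using weights by (simp flip: sum_distrib_right)
  show ?thesis
    unfolding rbcp_policy_def sum_Z sum_U sum_zeta
  proof (intro conjI allI ballI impI)
    fix i
    show "nonanticipating M X (\<lambda>t \<omega>. if i = k then W t \<omega> else 0)"
      using na by (cases "i = k") (simp_all add: nonanticipating_const)
    show "nonanticipating M X (\<lambda>t \<omega>. if i = j then L t \<omega> / lam j else 0)"
      using na by (cases "i = j") (simp_all add: nonanticipating_divide nonanticipating_const)
    show "nonanticipating M X (\<lambda>t \<omega>. w i * theta t \<omega>)"
      using na by (simp add: nonanticipating_mult)
  next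
    fix \<omega> and t :: real and i assume \<omega>: "\<omega> \<in> space M" and t: "0 \<le> t"
    show "set_integrable lborel {0..t} (\<lambda>s. W s \<omega>)"
      using integrable \<omega> t by blast
    have "set_integrable lborel {0..t} (\<lambda>s. theta s \<omega>)"
      using integrable \<omega> t by blast
    then show "set_integrable lborel {0..t} (\<lambda>s. w i * theta s \<omega>)"
      by simp
    show "W t \<omega> = X t \<omega> - eta * set_lebesgue_integral lborel {0..t} (\<lambda>s. W s \<omega>)
            - set_lebesgue_integral lborel {0..t} (\<lambda>s. theta s \<omega>) + L t \<omega>"
      using dynamics \<omega> t by blast
    show "0 \<le> (if i = k then W t \<omega> else 0)"
      using W_nonneg \<omega> t by simp
  next
    fix \<omega> i assume "\<omega> \<in> space M"
    then have "L 0 \<omega> = 0" and L_mono: "mono_on {0..} (\<lambda>t. L t \<omega>)"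
      using L_reg by auto
    then show "(if i = j then L 0 \<omega> / lam j else 0) = 0" by simp
    show "mono_on {0..} (\<lambda>t. if i = j then L t \<omega> / lam j else 0)"
      using mono_onD[OF L_mono] lam by (auto intro!: mono_onI divide_right_mono)
  qed
qed

lemma rbcp_cost_of_ewf_policy:
  fixes alpha :: "'i::finite \<Rightarrow> real"
  assumes alpha: "\<And>i. alpha i > 0"
  defines "alphahat \<equiv> \<Sum>i\<in>UNIV. 1 / alpha i"
  shows "rbcp_cost M alpha h0 hh c
           (\<lambda>i t \<omega>. if i = k then W t \<omega> else 0)
           (\<lambda>i t \<omega>. if i = j then L t \<omega> / lam j else 0)
           (\<lambda>i t \<omega>. (1 / alpha i) / alphahat * theta t \<omega>)
         = ewf_cost M alphahat (hh k - h0) (c j / lam j) theta L W"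
proof -
  have "alphahat > 0"
    unfolding alphahat_def using alpha by (intro sum_pos) auto
  have "alpha i * ((1 / alpha i) / alphahat * x)\<^sup>2 = 1 / alpha i * (x\<^sup>2 / alphahat\<^sup>2)" for i x
    using alpha[of i] by (simp add: field_simps power2_eq_square)
  then have "(\<Sum>i\<in>UNIV. alpha i * ((1 / alpha i) / alphahat * x)\<^sup>2) = alphahat * (x\<^sup>2 / alphahat\<^sup>2)"
    for x unfolding alphahat_def by (simp only: sum_distrib_right)
  also have "alphahat * (x\<^sup>2 / alphahat\<^sup>2) = x\<^sup>2 / alphahat" for x
    using \<open>alphahat > 0\<close> by (simp add: power2_eq_square)
  finally have control_cost:
    "(\<Sum>i\<in>UNIV. alpha i * ((1 / alpha i) / alphahat * x)\<^sup>2) = x\<^sup>2 / alphahat" for x .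
  show ?thesis
    unfolding rbcp_cost_eq_average_cost ewf_cost_eq_average_cost
    by (simp only: sum.distrib control_cost) (simp add: if_distrib[of "\<lambda>x. _ * x"] cong: if_cong)
qed

lemma ewf_policy_of_rbcp_policy:
  assumes rbcp: "rbcp_policy M X eta lam Z U zeta" and lam: "\<And>i. lam i \<ge> 0"
  shows "ewf_policy M X eta (\<lambda>t \<omega>. \<Sum>i\<in>UNIV. zeta i t \<omega>) (\<lambda>t \<omega>. \<Sum>i\<in>UNIV. lam i * U i t \<omega>)
           (\<lambda>t \<omega>. \<Sum>i\<in>UNIV. Z i t \<omega>)"
proof -
  have na: "\<And>i. nonanticipating M X (Z i)" "\<And>i. nonanticipating M X (U i)"
      "\<And>i. nonanticipating M X (zeta i)"
    and integrable: "\<forall>\<omega>\<in>space M. \<forall>t\<ge>0.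
        set_integrable lborel {0..t} (\<lambda>s. \<Sum>i\<in>UNIV. Z i s \<omega>) \<and>
        (\<forall>i. set_integrable lborel {0..t} (\<lambda>s. zeta i s \<omega>))"
    and dynamics: "\<forall>\<omega>\<in>space M. \<forall>t\<ge>0.
        (\<Sum>i\<in>UNIV. Z i t \<omega>) =
          X t \<omega> - eta * set_lebesgue_integral lborel {0..t} (\<lambda>s. \<Sum>i\<in>UNIV. Z i s \<omega>)
              - set_lebesgue_integral lborel {0..t} (\<lambda>s. \<Sum>i\<in>UNIV. zeta i s \<omega>)
              + (\<Sum>i\<in>UNIV. lam i * U i t \<omega>)"
    and Z_nonneg: "\<forall>\<omega>\<in>space M. \<forall>t\<ge>0. \<forall>i. 0 \<le> Z i t \<omega>"
    and U_reg: "\<forall>\<omega>\<in>space M. \<forall>i. U i 0 \<omega> = 0 \<and> mono_on {0..} (\<lambda>t. U i t \<omega>)"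
    using rbcp unfolding rbcp_policy_def by blast+
  show ?thesis
    unfolding ewf_policy_def
  proof (intro conjI allI ballI impI)
    show "nonanticipating M X (\<lambda>t \<omega>. \<Sum>i\<in>UNIV. zeta i t \<omega>)"
      by (intro nonanticipating_sum na)
    show "nonanticipating M X (\<lambda>t \<omega>. \<Sum>i\<in>UNIV. lam i * U i t \<omega>)"
      by (intro nonanticipating_sum nonanticipating_mult na)
    show "nonanticipating M X (\<lambda>t \<omega>. \<Sum>i\<in>UNIV. Z i t \<omega>)"
      by (intro nonanticipating_sum na)
  next
    fix \<omega> and t :: real assume \<omega>: "\<omega> \<in> space M" and t: "0 \<le> t"
    show "set_integrable lborel {0..t} (\<lambda>s. \<Sum>i\<in>UNIV. Z i s \<omega>)"
      using integrable \<omega> t by blast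
    have "set_integrable lborel {0..t} (\<lambda>s. zeta i s \<omega>)" for i
      using integrable \<omega> t by blast
    then show "set_integrable lborel {0..t} (\<lambda>s. \<Sum>i\<in>UNIV. zeta i s \<omega>)"
      by (rule set_integrable_sum)
    show "(\<Sum>i\<in>UNIV. Z i t \<omega>) =
        X t \<omega> - eta * set_lebesgue_integral lborel {0..t} (\<lambda>s. \<Sum>i\<in>UNIV. Z i s \<omega>)
          - set_lebesgue_integral lborel {0..t} (\<lambda>s. \<Sum>i\<in>UNIV. zeta i s \<omega>)
          + (\<Sum>i\<in>UNIV. lam i * U i t \<omega>)"
      using dynamics \<omega> t by blast
    show "0 \<le> (\<Sum>i\<in>UNIV. Z i t \<omega>)"
      using Z_nonneg \<omega> t by (simp add: sum_nonneg)
  next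
    fix \<omega> assume "\<omega> \<in> space M"
    then have "U i 0 \<omega> = 0" and U_mono: "mono_on {0..} (\<lambda>t. U i t \<omega>)" for i
      using U_reg by auto
    then show "(\<Sum>i\<in>UNIV. lam i * U i 0 \<omega>) = 0" by simp
    show "mono_on {0..} (\<lambda>t. \<Sum>i\<in>UNIV. lam i * U i t \<omega>)"
      using mono_onD[OF U_mono] lam by (auto intro!: mono_onI sum_mono mult_left_mono)
  qed
qed

lemma ewf_cost_of_rbcp_policy_le:
  fixes alpha :: "'i::finite \<Rightarrow> real"
  assumes rbcp: "rbcp_policy M X eta lam Z U zeta" and alpha: "\<And>i. alpha i > 0"
    and h: "\<And>i. h \<le> hh i - h0" and r: "\<And>i. r * lam i \<le> c i"
  shows "ewf_cost M (\<Sum>i\<in>UNIV. 1 / alpha i) h r (\<lambda>t \<omega>. \<Sum>i\<in>UNIV. zeta i t \<omega>)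
           (\<lambda>t \<omega>. \<Sum>i\<in>UNIV. lam i * U i t \<omega>) (\<lambda>t \<omega>. \<Sum>i\<in>UNIV. Z i t \<omega>)
         \<le> rbcp_cost M alpha h0 hh c Z U zeta"
  unfolding rbcp_cost_eq_average_cost ewf_cost_eq_average_cost
proof (rule average_cost_mono)
  have Z_nonneg: "\<forall>\<omega>\<in>space M. \<forall>t\<ge>0. \<forall>i. 0 \<le> Z i t \<omega>"
    and U_reg: "\<forall>\<omega>\<in>space M. \<forall>i. U i 0 \<omega> = 0 \<and> mono_on {0..} (\<lambda>t. U i t \<omega>)"
    using rbcp unfolding rbcp_policy_def by blast+
  fix t :: real and \<omega> assume t: "0 \<le> t" and \<omega>: "\<omega> \<in> space M"
  have "h * (\<Sum>i\<in>UNIV. Z i t \<omega>) \<le> (\<Sum>i\<in>UNIV. (hh i - h0) * Z i t \<omega>)"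
    unfolding sum_distrib_left using h Z_nonneg t \<omega> by (intro sum_mono mult_right_mono) auto
  with square_sum_div_sum_inverse_le[of UNIV alpha "\<lambda>i. zeta i t \<omega>"] alpha
  show "(\<Sum>i\<in>UNIV. zeta i t \<omega>)\<^sup>2 / (\<Sum>i\<in>UNIV. 1 / alpha i) + h * (\<Sum>i\<in>UNIV. Z i t \<omega>)
      \<le> (\<Sum>i\<in>UNIV. alpha i * (zeta i t \<omega>)\<^sup>2 + (hh i - h0) * Z i t \<omega>)"
    by (simp add: sum.distrib add_mono)
  have "0 \<le> U i t \<omega>" for i
    using U_reg t \<omega> mono_onD[of "{0..}" "\<lambda>t. U i t \<omega>" 0 t] by auto
  then show "r * (\<Sum>i\<in>UNIV. lam i * U i t \<omega>) \<le> (\<Sum>i\<in>UNIV. c i * U i t \<omega>)"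
    unfolding sum_distrib_left mult.assoc[symmetric] using r
    by (intro sum_mono mult_right_mono) auto
qed

lemma ex_rbcp_policy_with_ewf_cost:
  fixes alpha :: "'i::finite \<Rightarrow> real"
  assumes ewf: "ewf_policy M X eta theta L W" and alpha: "\<And>i. alpha i > 0" and lam: "lam j > 0"
  shows "\<exists>Z U zeta. rbcp_policy M X eta lam Z U zeta \<and>
           rbcp_cost M alpha h0 hh c Z U zeta
           = ewf_cost M (\<Sum>i\<in>UNIV. 1 / alpha i) (hh k - h0) (c j / lam j) theta L W"
proof -
  define Z where "Z = (\<lambda>i t \<omega>. if i = k then W t \<omega> else (0::real))"
  define U where "U = (\<lambda>i t \<omega>. if i = j then L t \<omega> / lam j else (0::real))"
  define zeta where "zeta = (\<lambda>i t \<omega>. (1 / alpha i) / (\<Sum>i\<in>UNIV. 1 / alpha i) * theta t \<omega>)"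
  have "(\<Sum>i\<in>UNIV. 1 / alpha i) > 0"
    using alpha by (intro sum_pos) auto
  then have "(\<Sum>i\<in>UNIV. (1 / alpha i) / (\<Sum>i\<in>UNIV. 1 / alpha i)) = 1"
    unfolding sum_divide_distrib[symmetric] by simp
  with ewf lam have "rbcp_policy M X eta lam Z U zeta"
    unfolding Z_def U_def zeta_def by (rule rbcp_policy_of_ewf_policy)
  moreover have "rbcp_cost M alpha h0 hh c Z U zeta
      = ewf_cost M (\<Sum>i\<in>UNIV. 1 / alpha i) (hh k - h0) (c j / lam j) theta L W"
    unfolding Z_def U_def zeta_def using alpha by (rule rbcp_cost_of_ewf_policy)
  ultimately show ?thesis
    by blast
qed

lemma ex_ewf_policy_with_le_cost:
  fixes alpha :: "'i::finite \<Rightarrow> real"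
  assumes rbcp: "rbcp_policy M X eta lam Z U zeta" and alpha: "\<And>i. alpha i > 0"
    and lam: "\<And>i. lam i \<ge> 0" and h: "\<And>i. h \<le> hh i - h0" and r: "\<And>i. r * lam i \<le> c i"
  shows "\<exists>theta L W. ewf_policy M X eta theta L W \<and>
           ewf_cost M (\<Sum>i\<in>UNIV. 1 / alpha i) h r theta L W \<le> rbcp_cost M alpha h0 hh c Z U zeta"
proof -
  have "ewf_policy M X eta (\<lambda>t \<omega>. \<Sum>i\<in>UNIV. zeta i t \<omega>) (\<lambda>t \<omega>. \<Sum>i\<in>UNIV. lam i * U i t \<omega>)
      (\<lambda>t \<omega>. \<Sum>i\<in>UNIV. Z i t \<omega>)"
    using rbcp lam by (rule ewf_policy_of_rbcp_policy)
  moreover have "ewf_cost M (\<Sum>i\<in>UNIV. 1 / alpha i) h r (\<lambda>t \<omega>. \<Sum>i\<in>UNIV. zeta i t \<omega>)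
      (\<lambda>t \<omega>. \<Sum>i\<in>UNIV. lam i * U i t \<omega>) (\<lambda>t \<omega>. \<Sum>i\<in>UNIV. Z i t \<omega>)
      \<le> rbcp_cost M alpha h0 hh c Z U zeta"
    using rbcp alpha h r by (rule ewf_cost_of_rbcp_policy_le)
  ultimately show ?thesis
    by blast
qed

theorem proposition2:
  fixes M :: "'a measure" and chi :: "real \<Rightarrow> 'a \<Rightarrow> real"
    and a sigma eta h0 :: real
    and lam alpha hh c :: "'i::finite \<Rightarrow> real"
  assumes "brownian_motion_drift M chi a sigma" and "sigma > 0"
    and "\<forall>\<omega>\<in>space M. 0 \<le> chi 0 \<omega>"
    and "eta > 0"
    and "\<forall>i. lam i > 0" and "\<forall>i. alpha i > 0"
    and "h0 \<ge> 0" and "\<forall>i. hh i > h0" and "\<forall>i. c i \<ge> 0"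
  shows "(\<forall>theta L W. ewf_policy M chi eta theta L W \<longrightarrow>
            (\<exists>Z U zeta. rbcp_policy M chi eta lam Z U zeta \<and>
               rbcp_cost M alpha h0 hh c Z U zeta =
               ewf_cost M (\<Sum>i\<in>UNIV. 1 / alpha i) ((MIN i. hh i) - h0) (MIN i. c i / lam i)
                 theta L W)) \<and>
         (\<forall>Z U zeta. rbcp_policy M chi eta lam Z U zeta \<longrightarrow>
            (\<exists>theta L W. ewf_policy M chi eta theta L W \<and>
               ewf_cost M (\<Sum>i\<in>UNIV. 1 / alpha i) ((MIN i. hh i) - h0) (MIN i. c i / lam i)
                 theta L W
               \<le> rbcp_cost M alpha h0 hh c Z U zeta))"
proof -
  have lam: "\<And>i. lam i > 0" and alpha: "\<And>i. alpha i > 0"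
    using assms(5,6) by blast+
  obtain k where k: "hh k = (MIN i. hh i)"
    using Min_in[of "range hh"] by fastforce
  obtain j where j: "c j / lam j = (MIN i. c i / lam i)"
    using Min_in[of "range (\<lambda>i. c i / lam i)"] by fastforce
  have h: "hh k - h0 \<le> hh i - h0" and r: "c j / lam j * lam i \<le> c i"
    and lam_nonneg: "lam i \<ge> 0" for i
    using lam[of i] by (simp_all add: k j pos_le_divide_eq[symmetric])
  show ?thesis
    unfolding k[symmetric] j[symmetric]
    by (intro conjI allI impI ex_rbcp_policy_with_ewf_cost
        ex_ewf_policy_with_le_cost[where lam = lam] alpha lam lam_nonneg h r)
qed

end
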